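(* In the setting described in the context, assume condition (j). Assume moreover that there is a sequence $(\overline T_n)_n$ with $T_{2n}>\overline T_n$ for all $n$, such that for every $n\in\mathbb N$ and every $T\in(\overline T_n,T_{2n}]$ there is a constant $d_n>0$ (depending on $T$, independent of the data) with $$E_S(t_{2n}+T)\le d_n\int_{t_{2n}}^{t_{2n}+T}\|B_1^*(t)w_t(t)\|_{U_1}^2\,dt$$ for every weak solution $w$ of $w_{tt}+Aw+B_1(t)B_1^*(t)w_t=f(w)$ on $(t_{2n},t_{2n+1})$, $w(t_{2n})=w_0^n\in V$, $w_t(t_{2n})=w_1^n\in H$. Then every solution $u$ of $$u_{tt}(t)+Au(t)+B_1(t)B_1^*(t)u_t(t)-B_3(t)B_3^*(t)u_t(t)=f(u),\ t>0,\qquad u(0)=u_0,\ u_t(0)=u_1,$$ satisfies $E_S(t_{2n+1})\le\hat d_nE_S(t_{2n})$ for all $n\in\mathbb N$, where $\hat d_n=\frac{d_n}{d_n+1}$ and $d_n$ is the constant corresponding to $T=T_{2n}$.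
   Context: $E_S(t)=\frac12(\|u(t)\|_V^2+\|u_t(t)\|_H^2)-\mathcal F(u(t))$ (similarly for $w$). $H$ is a real Hilbert space, $A:\mathcal D(A)\to H$ a densely defined, self-adjoint, positive, coercive linear operator, $V=\mathcal D(A^{1/2})$ with $\|v\|_V=\|A^{1/2}v\|_H$, $V\hookrightarrow H\equiv H'\hookrightarrow V'$ densely. $U_1,U_3$ are real Hilbert spaces, $B_i(t)\in\mathcal L(U_i,H)$, $i=1,3$, with $B_1^*(t)B_3^*(t)=0$ for $t>0$. There is a sequence $0=t_0<t_1<\cdots$; $I_n=[t_n,t_{n+1})$, $T_n=t_{n+1}-t_n$; $B_3=0$ on $I_{2n}$, $B_1=0$ on $I_{2n+1}$, $B_1\in C^1([t_{2n},t_{2n+1}];\mathcal L(U_1,H))$, $B_3\in C([t_{2n+1},t_{2n+2}];\mathcal L(U_3,H))$. $W_1$ is a Hilbert space with $\|u\|_{W_1}^2\le C_1\|u\|_H^2$ for $u\in H$. $f:V\to H$ is locally Lipschitz, $\mathcal F:V\to\mathbb R$ with $\mathcal F(0)=0$, $\mathcal F'(u)v=\langle f(u),v\rangle_{V',V}$. (j): for every $n$ there are $0<m_{2n}\le M_{2n}$ with $m_{2n}\|u\|_{W_1}^2\le\|B_1^*(t)u\|_{U_1}^2\le M_{2n}\|u\|_{W_1}^2$ for $u\in H$, $t\in I_{2n}$. *)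

theory Defs
  imports "HOL-Analysis.Analysis"
begin

definition linear_on_dom :: "'h::real_vector set \<Rightarrow> ('h \<Rightarrow> 'h) \<Rightarrow> bool" where
  "linear_on_dom D T \<longleftrightarrow> subspace D \<and>
     (\<forall>x\<in>D. \<forall>y\<in>D. T (x + y) = T x + T y) \<and> (\<forall>c. \<forall>x\<in>D. T (c *\<^sub>R x) = c *\<^sub>R T x)"

text \<open>Densely defined self-adjoint (possibly unbounded) linear operator T with domain D
  on a real Hilbert space: D(T^*) = D and T^* = T on D.\<close>
definition self_adjoint_op :: "'h::{real_inner,complete_space} set \<Rightarrow> ('h \<Rightarrow> 'h) \<Rightarrow> bool" where
  "self_adjoint_op D T \<longleftrightarrow> linear_on_dom D T \<and> closure D = UNIV \<and>
     {y. \<exists>z. \<forall>x\<in>D. inner (T x) y = inner x z} = D \<and>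
     (\<forall>x\<in>D. \<forall>y\<in>D. inner (T x) y = inner x (T y))"

definition positive_op :: "'h::real_inner set \<Rightarrow> ('h \<Rightarrow> 'h) \<Rightarrow> bool" where
  "positive_op D T \<longleftrightarrow> (\<forall>x\<in>D. 0 \<le> inner (T x) x)"

definition coercive_op :: "'h::real_inner set \<Rightarrow> ('h \<Rightarrow> 'h) \<Rightarrow> bool" where
  "coercive_op D T \<longleftrightarrow> (\<exists>c>0. \<forall>x\<in>D. c * (norm x)\<^sup>2 \<le> inner (T x) x)"

text \<open>S with domain DS is the (positive self-adjoint) square root A^(1/2) of A with domain DA:
  S is positive self-adjoint and S o S = A (including equality of domains).\<close>
definition is_op_sqrt ::
  "'h::{real_inner,complete_space} set \<Rightarrow> ('h \<Rightarrow> 'h) \<Rightarrow> 'h set \<Rightarrow> ('h \<Rightarrow> 'h) \<Rightarrow> bool" where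
  "is_op_sqrt DS S DA A \<longleftrightarrow> self_adjoint_op DS S \<and> positive_op DS S \<and>
     DA = {x\<in>DS. S x \<in> DS} \<and> (\<forall>x\<in>DA. S (S x) = A x)"

definition is_adjoint ::
  "('u::real_inner \<Rightarrow>\<^sub>L 'h::real_inner) \<Rightarrow> ('h \<Rightarrow>\<^sub>L 'u) \<Rightarrow> bool" where
  "is_adjoint B Bs \<longleftrightarrow> (\<forall>x y. inner (B x) y = inner x (Bs y))"

text \<open>f : V \<rightarrow> H locally Lipschitz (Lipschitz on bounded sets of V), with V = DS,
  norm_V v = norm (S v).\<close>
definition loc_lipschitz_V :: "'h set \<Rightarrow> ('h \<Rightarrow> 'h) \<Rightarrow> ('h::real_normed_vector \<Rightarrow> 'h) \<Rightarrow> bool" where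
  "loc_lipschitz_V DS S f \<longleftrightarrow> (\<forall>r>0. \<exists>L. \<forall>x\<in>DS. \<forall>y\<in>DS.
      norm (S x) \<le> r \<longrightarrow> norm (S y) \<le> r \<longrightarrow> norm (f x - f y) \<le> L * norm (S (x - y)))"

text \<open>F : V \<rightarrow> R is Frechet differentiable on V (w.r.t. the V-norm) with
  F'(u) v = <f(u), v>.\<close>
definition V_derivative :: "'h set \<Rightarrow> ('h \<Rightarrow> 'h) \<Rightarrow> ('h \<Rightarrow> real) \<Rightarrow> ('h::real_inner \<Rightarrow> 'h) \<Rightarrow> bool" where
  "V_derivative DS S F f \<longleftrightarrow> (\<forall>u\<in>DS. \<forall>e>0. \<exists>d>0. \<forall>v\<in>DS.
      norm (S (v - u)) < d \<longrightarrow> \<bar>F v - F u - inner (f u) (v - u)\<bar> \<le> e * norm (S (v - u)))"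

text \<open>Weak solution on the interval J of  u'' + A u + D(t) u' = f(u):
  u \<in> C(J;V) \<inter> C^1(J;H) with derivative ut, and for every test vector phi \<in> V and s \<le> t in J,
  <ut t, phi> - <ut s, phi> = integral over [s,t] of
     ( <f(u), phi> - <A^(1/2) u, A^(1/2) phi> - <D(tau) ut, phi> ).\<close>
definition weak_sol ::
  "real set \<Rightarrow> 'h set \<Rightarrow> ('h \<Rightarrow> 'h) \<Rightarrow> ('h \<Rightarrow> 'h) \<Rightarrow> (real \<Rightarrow> 'h \<Rightarrow> 'h)
   \<Rightarrow> (real \<Rightarrow> 'h::{real_inner,complete_space}) \<Rightarrow> (real \<Rightarrow> 'h) \<Rightarrow> bool" where
  "weak_sol J DS S f Dmp u ut \<longleftrightarrow>
     (\<forall>t\<in>J. u t \<in> DS) \<and>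
     continuous_on J u \<and> continuous_on J (\<lambda>t. S (u t)) \<and>
     (\<forall>t\<in>J. (u has_vector_derivative ut t) (at t within J)) \<and> continuous_on J ut \<and>
     (\<forall>phi\<in>DS. \<forall>s\<in>J. \<forall>t\<in>J. s \<le> t \<longrightarrow>
        ((\<lambda>tau. inner (f (u tau)) phi - inner (S (u tau)) (S phi) - inner (Dmp tau (ut tau)) phi)
          has_integral (inner (ut t) phi - inner (ut s) phi)) {s..t})"

definition energy :: "('h \<Rightarrow> 'h) \<Rightarrow> ('h \<Rightarrow> real) \<Rightarrow> (real \<Rightarrow> 'h) \<Rightarrow> (real \<Rightarrow> 'h::real_normed_vector) \<Rightarrow> real \<Rightarrow> real" where
  "energy S F u ut t = (1/2) * ((norm (S (u t)))\<^sup>2 + (norm (ut t))\<^sup>2) - F (u t)"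

end

theory Submission
  imports Defs
begin

text \<open>On [t_2n, t_2n+1) the antidamping term B3 vanishes, so u is there a weak solution of the
  purely damped problem, and its energy satisfies the dissipation identity
  E(t_2n) - E(t_2n+1) = \<integral> \<parallel>B1* u_t\<parallel>^2. The observability estimate with T = T_2n then gives
  E(t_2n+1) \<le> d_n (E(t_2n) - E(t_2n+1)), which rearranges to the claim.

  As u_t is not an admissible test function for a weak solution, the dissipation identity needs
  an argument: testing with the Steklov average (u(t+h) - u(t))/h of u_t gives it exactly for the
  energy of the Steklov averages of A^(1/2) u and u_t, and h \<rightarrow> 0 by dominated convergence
  yields it for u itself.\<close>

section \<open>Steklov averages\<close>

text \<open>A type variable of sort \<open>{real_inner, complete_space}\<close> is not of sort \<open>banach\<close>, which
  the integration theory for vector-valued functions requires; this isomorphic copy is.\<close>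

typedef ('a::"{real_inner,complete_space}") hcopy = "UNIV :: 'a set" by auto
setup_lifting type_definition_hcopy

instantiation hcopy :: ("{real_inner,complete_space}") real_inner
begin
lift_definition zero_hcopy :: "'a hcopy" is 0 .
lift_definition plus_hcopy :: "'a hcopy \<Rightarrow> 'a hcopy \<Rightarrow> 'a hcopy" is "(+)" .
lift_definition minus_hcopy :: "'a hcopy \<Rightarrow> 'a hcopy \<Rightarrow> 'a hcopy" is "(-)" .
lift_definition uminus_hcopy :: "'a hcopy \<Rightarrow> 'a hcopy" is uminus .
lift_definition scaleR_hcopy :: "real \<Rightarrow> 'a hcopy \<Rightarrow> 'a hcopy" is scaleR .
lift_definition norm_hcopy :: "'a hcopy \<Rightarrow> real" is norm .
lift_definition sgn_hcopy :: "'a hcopy \<Rightarrow> 'a hcopy" is sgn .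
lift_definition dist_hcopy :: "'a hcopy \<Rightarrow> 'a hcopy \<Rightarrow> real" is dist .
lift_definition inner_hcopy :: "'a hcopy \<Rightarrow> 'a hcopy \<Rightarrow> real" is inner .
definition uniformity_hcopy :: "('a hcopy \<times> 'a hcopy) filter" where
  "uniformity_hcopy = (INF e\<in>{0<..}. principal {(x, y). dist x y < e})"
definition open_hcopy :: "'a hcopy set \<Rightarrow> bool" where
  "open_hcopy U = (\<forall>x\<in>U. eventually (\<lambda>(x', y). x' = x \<longrightarrow> y \<in> U) uniformity)"
instance
proof
  fix x y z :: "'a hcopy" and a b :: real and U :: "'a hcopy set"
  show "x + y + z = x + (y + z)" by transfer (simp add: add.assoc)
  show "x + y = y + x" by transfer (simp add: add.commute)
  show "0 + x = x" by transfer simp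
  show "- x + x = 0" by transfer simp
  show "x - y = x + - y" by transfer simp
  show "a *\<^sub>R (x + y) = a *\<^sub>R x + a *\<^sub>R y" by transfer (simp add: scaleR_add_right)
  show "(a + b) *\<^sub>R x = a *\<^sub>R x + b *\<^sub>R x" by transfer (simp add: scaleR_add_left)
  show "a *\<^sub>R b *\<^sub>R x = (a * b) *\<^sub>R x" by transfer simp
  show "1 *\<^sub>R x = x" by transfer simp
  show "dist x y = norm (x - y)" by transfer (simp add: dist_norm)
  show "sgn x = inverse (norm x) *\<^sub>R x" by transfer (simp add: sgn_div_norm)
  show "uniformity = (INF e\<in>{0<..}. principal {(x, y::'a hcopy). dist x y < e})"
    by (simp add: uniformity_hcopy_def)
  show "open U = (\<forall>x\<in>U. eventually (\<lambda>(x', y). x' = x \<longrightarrow> y \<in> U) uniformity)"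
    by (simp add: open_hcopy_def)
  show "inner x y = inner y x" by transfer (rule inner_commute)
  show "inner (x + y) z = inner x z + inner y z" by transfer (rule inner_add_left)
  show "inner (a *\<^sub>R x) y = a * inner x y" by transfer simp
  show "0 \<le> inner x x" by transfer simp
  show "inner x x = 0 \<longleftrightarrow> x = 0" by transfer simp
  show "norm x = sqrt (inner x x)" by transfer (rule norm_eq_sqrt_inner)
qed
end

lemma dist_hcopy_Rep: "dist x y = dist (Rep_hcopy x) (Rep_hcopy y)"
  by transfer simp

instance hcopy :: ("{real_inner,complete_space}") complete_space
proof
  fix X :: "nat \<Rightarrow> 'a hcopy"
  assume "Cauchy X"
  hence "Cauchy (\<lambda>n. Rep_hcopy (X n))"
    unfolding Cauchy_def by (simp add: dist_hcopy_Rep)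
  then obtain L where L: "(\<lambda>n. Rep_hcopy (X n)) \<longlonglongrightarrow> L"
    using convergent_def Cauchy_convergent_iff by blast
  have "X \<longlonglongrightarrow> Abs_hcopy L"
    using L unfolding lim_sequentially by (simp add: dist_hcopy_Rep Abs_hcopy_inverse)
  thus "convergent X" by (auto simp: convergent_def)
qed

instance hcopy :: ("{real_inner,complete_space}") banach ..

lemma Rep_hcopy_add: "Rep_hcopy (x + y) = Rep_hcopy x + Rep_hcopy y" by transfer simp
lemma Rep_hcopy_diff: "Rep_hcopy (x - y) = Rep_hcopy x - Rep_hcopy y" by transfer simp
lemma Rep_hcopy_scaleR: "Rep_hcopy (c *\<^sub>R x) = c *\<^sub>R Rep_hcopy x" by transfer simp
lemma norm_Rep_hcopy: "norm (Rep_hcopy x) = norm x" by transfer simp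

lemma Abs_hcopy_add: "Abs_hcopy (x + y) = Abs_hcopy x + Abs_hcopy y"
  by (metis Abs_hcopy_inverse Rep_hcopy_add Rep_hcopy_inverse UNIV_I)
lemma Abs_hcopy_scaleR: "Abs_hcopy (c *\<^sub>R x) = c *\<^sub>R Abs_hcopy x"
  by (metis Abs_hcopy_inverse Rep_hcopy_scaleR Rep_hcopy_inverse UNIV_I)
lemma Abs_hcopy_diff: "Abs_hcopy (x - y) = Abs_hcopy x - Abs_hcopy y"
  by (metis Abs_hcopy_inverse Rep_hcopy_diff Rep_hcopy_inverse UNIV_I)
lemma norm_Abs_hcopy: "norm (Abs_hcopy x) = norm x"
  by (metis Abs_hcopy_inverse UNIV_I norm_Rep_hcopy)

lemma bounded_linear_Rep_hcopy: "bounded_linear Rep_hcopy"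
  by (rule bounded_linear_intro[where K=1]) (auto simp: Rep_hcopy_add Rep_hcopy_scaleR norm_Rep_hcopy)
lemma bounded_linear_Abs_hcopy: "bounded_linear Abs_hcopy"
  by (rule bounded_linear_intro[where K=1]) (auto simp: Abs_hcopy_add Abs_hcopy_scaleR norm_Abs_hcopy)

lemma continuous_on_Abs_hcopy: "continuous_on X g \<Longrightarrow> continuous_on X (\<lambda>x. Abs_hcopy (g x))"
  using bounded_linear.continuous_on[OF bounded_linear_Abs_hcopy] by blast

definition steklov_avg :: "real \<Rightarrow> (real \<Rightarrow> 'h::{real_inner,complete_space}) \<Rightarrow> real \<Rightarrow> 'h" where
  "steklov_avg h g t = (1/h) *\<^sub>R Rep_hcopy (integral {t..t+h} (\<lambda>\<tau>. Abs_hcopy (g \<tau>)))"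

lemma has_integral_inner_steklov_avg:
  fixes g :: "real \<Rightarrow> 'h::{real_inner,complete_space}"
  assumes gc: "continuous_on {p..q} g" and "p \<le> t" "t + h \<le> q" "0 < h"
  shows "((\<lambda>\<tau>. inner (g \<tau>) c) has_integral (h * inner (steklov_avg h g t) c)) {t..t+h}"
proof -
  let ?G = "\<lambda>x. Abs_hcopy (g x)"
  have "continuous_on {t..t+h} ?G"
    by (rule continuous_on_Abs_hcopy, rule continuous_on_subset[OF gc]) (use assms in auto)
  hence I: "(?G has_integral integral {t..t+h} ?G) {t..t+h}"
    by (rule integrable_integral[OF integrable_continuous_real])
  have "bounded_linear (\<lambda>x. inner (Rep_hcopy x) c)"
    using bounded_linear_compose[OF bounded_linear_inner_left[of c] bounded_linear_Rep_hcopy] by simp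
  from has_integral_linear[OF I this]
  have "((\<lambda>x. inner (Rep_hcopy (?G x)) c) has_integral inner (Rep_hcopy (integral {t..t+h} ?G)) c) {t..t+h}"
    by (simp add: o_def)
  thus ?thesis using assms by (simp add: steklov_avg_def Abs_hcopy_inverse)
qed

lemma steklov_avg_has_vector_derivative:
  fixes g :: "real \<Rightarrow> 'h::{real_inner,complete_space}"
  assumes gc: "continuous_on {p..q'} g" and t: "t \<in> {p..q}" and hq: "q + h \<le> q'" and h: "0 < h"
  shows "(steklov_avg h g has_vector_derivative (1/h) *\<^sub>R (g (t+h) - g t)) (at t within {p..q})"
proof -
  let ?G = "\<lambda>x. Abs_hcopy (g x)"
  have Gc: "continuous_on {p..q'} ?G" by (rule continuous_on_Abs_hcopy[OF gc])
  have sub: "{p..q} \<subseteq> {p..q'}" and img: "(\<lambda>x. x + h) ` {p..q} \<subseteq> {p..q'}" using hq h by auto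
  have D1: "((\<lambda>x. integral {p..x} ?G) has_vector_derivative ?G t) (at t within {p..q})"
    using has_vector_derivative_within_subset[OF integral_has_vector_derivative[OF Gc] sub] t sub
    by blast
  have shift: "((\<lambda>x. x + h) has_vector_derivative 1) (at t within {p..q})"
    by (auto intro!: derivative_eq_intros simp: has_real_derivative_iff_has_vector_derivative[symmetric])
  have "((\<lambda>x. integral {p..x} ?G) has_vector_derivative ?G (t+h)) (at (t+h) within (\<lambda>x. x + h) ` {p..q})"
    using has_vector_derivative_within_subset[OF integral_has_vector_derivative[OF Gc] img] t hq h
    by auto
  from vector_diff_chain_within[OF shift this]
  have D2: "((\<lambda>x. integral {p..x+h} ?G) has_vector_derivative ?G (t+h)) (at t within {p..q})"
    by (simp add: o_def)
  have split: "integral {x..x+h} ?G = integral {p..x+h} ?G - integral {p..x} ?G" if x: "x \<in> {p..q}" for x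
  proof -
    have "?G integrable_on {p..x+h}"
      by (rule integrable_on_subinterval[OF integrable_continuous_real[OF Gc]]) (use x hq h in auto)
    from Henstock_Kurzweil_Integration.integral_combine[OF _ _ this, of x] x h show ?thesis
      by (auto simp: algebra_simps)
  qed
  have "((\<lambda>x. integral {x..x+h} ?G) has_vector_derivative (?G (t+h) - ?G t)) (at t within {p..q})"
    by (rule has_vector_derivative_transform_within[OF has_vector_derivative_diff[OF D2 D1], where d=1])
       (use t split in auto)
  from bounded_linear.has_vector_derivative[OF _ this]
  have "((\<lambda>x. (1/h) *\<^sub>R Rep_hcopy (integral {x..x+h} ?G)) has_vector_derivative
      (1/h) *\<^sub>R Rep_hcopy (?G (t+h) - ?G t)) (at t within {p..q})"
    using bounded_linear_compose[OF bounded_linear_scaleR_right bounded_linear_Rep_hcopy] by blast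
  thus ?thesis unfolding steklov_avg_def by (simp add: Rep_hcopy_diff Abs_hcopy_inverse)
qed

lemma norm_steklov_avg_diff_le:
  fixes g :: "real \<Rightarrow> 'h::{real_inner,complete_space}"
  assumes gc: "continuous_on {p..q} g" and "p \<le> t" "t + h \<le> q" "0 < h"
    and B: "\<And>\<tau>. \<tau> \<in> {t..t+h} \<Longrightarrow> norm (g \<tau> - c) \<le> B"
  shows "norm (steklov_avg h g t - c) \<le> B"
proof -
  let ?G = "\<lambda>x. Abs_hcopy (g x)"
  have "continuous_on {t..t+h} ?G"
    by (rule continuous_on_Abs_hcopy, rule continuous_on_subset[OF gc]) (use assms in auto)
  hence "(?G has_integral integral {t..t+h} ?G) {t..t+h}"
    by (rule integrable_integral[OF integrable_continuous_real])
  moreover have "((\<lambda>x. Abs_hcopy c) has_integral h *\<^sub>R Abs_hcopy c) {t..t+h}"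
    using has_integral_const_real[of "Abs_hcopy c" t "t+h"] assms by simp
  ultimately have D: "((\<lambda>x. ?G x - Abs_hcopy c) has_integral
      (integral {t..t+h} ?G - h *\<^sub>R Abs_hcopy c)) (cbox t (t+h))"
    by (simp add: has_integral_diff)
  have "0 \<le> B" using B[of t] assms by (meson atLeastAtMost_iff norm_ge_zero order_trans less_eq_real_def le_add_same_cancel1)
  from has_integral_bound[OF this D]
  have n: "norm (integral {t..t+h} ?G - h *\<^sub>R Abs_hcopy c) \<le> B * h"
    using B assms by (simp add: Abs_hcopy_diff[symmetric] norm_Abs_hcopy)
  have "steklov_avg h g t - c = (1/h) *\<^sub>R Rep_hcopy (integral {t..t+h} ?G - h *\<^sub>R Abs_hcopy c)"
    using assms
    by (simp add: steklov_avg_def Rep_hcopy_diff Rep_hcopy_scaleR Abs_hcopy_inverse scaleR_diff_right)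
  hence "norm (steklov_avg h g t - c) = (1/h) * norm (integral {t..t+h} ?G - h *\<^sub>R Abs_hcopy c)"
    using assms by (simp add: norm_Rep_hcopy)
  also have "\<dots> \<le> (1/h) * (B * h)" using n assms by (intro mult_left_mono) auto
  finally show ?thesis using assms by simp
qed

lemma steklov_avg_tendsto:
  fixes g :: "real \<Rightarrow> 'h::{real_inner,complete_space}"
  assumes gc: "continuous_on {p..q'} g" and t: "t \<in> {p..q}"
    and hk: "\<And>k. 0 < hk k" "\<And>k. q + hk k \<le> q'" and lim: "hk \<longlonglongrightarrow> 0"
  shows "(\<lambda>k. steklov_avg (hk k) g t) \<longlonglongrightarrow> g t"
proof (rule tendstoI)
  fix e :: real assume e: "0 < e"
  have "t \<in> {p..q'}" using t hk(1)[of 0] hk(2)[of 0] by auto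
  with gc e obtain d where d: "0 < d"
    "\<And>\<tau>. \<tau> \<in> {p..q'} \<Longrightarrow> dist \<tau> t < d \<Longrightarrow> dist (g \<tau>) (g t) < e/2"
    unfolding continuous_on_iff by (metis half_gt_zero)
  show "eventually (\<lambda>k. dist (steklov_avg (hk k) g t) (g t) < e) sequentially"
  proof (rule eventually_mono[OF order_tendstoD(2)[OF lim d(1)]])
    fix k assume hd: "hk k < d"
    have "norm (steklov_avg (hk k) g t - g t) \<le> e/2"
    proof (rule norm_steklov_avg_diff_le[OF gc])
      show "p \<le> t" "t + hk k \<le> q'" "0 < hk k" using t hk[of k] by auto
      fix \<tau> assume "\<tau> \<in> {t..t + hk k}"
      hence "\<tau> \<in> {p..q'}" "dist \<tau> t < d" using t hk[of k] hd by (auto simp: dist_real_def)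
      thus "norm (g \<tau> - g t) \<le> e/2" using d(2) by (fastforce simp: dist_norm)
    qed
    thus "dist (steklov_avg (hk k) g t) (g t) < e" using e by (simp add: dist_norm)
  qed
qed

lemma steklov_avg_of_derivative:
  fixes u ut :: "real \<Rightarrow> 'h::{real_inner,complete_space}"
  assumes der: "\<And>x. x \<in> {t..t+h} \<Longrightarrow> (u has_vector_derivative ut x) (at x within {t..t+h})"
    and h: "0 < h"
  shows "steklov_avg h ut t = (1/h) *\<^sub>R (u (t+h) - u t)"
proof -
  have "((\<lambda>x. Abs_hcopy (ut x)) has_integral (Abs_hcopy (u (t+h)) - Abs_hcopy (u t))) {t..t+h}"
    by (rule fundamental_theorem_of_calculus)
       (use h in \<open>auto intro!: bounded_linear.has_vector_derivative[OF bounded_linear_Abs_hcopy] der\<close>)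
  hence "integral {t..t+h} (\<lambda>x. Abs_hcopy (ut x)) = Abs_hcopy (u (t+h)) - Abs_hcopy (u t)"
    by (rule integral_unique)
  thus ?thesis by (simp add: steklov_avg_def Rep_hcopy_diff Abs_hcopy_inverse)
qed

lemma obtain_vanishing_widths:
  fixes q q' :: real
  assumes "q < q'"
  obtains hk :: "nat \<Rightarrow> real" where "\<And>k. 0 < hk k" "\<And>k. q + hk k \<le> q'" "hk \<longlonglongrightarrow> 0"
proof
  let ?hk = "\<lambda>k. (q' - q) * inverse (real (Suc k))"
  show "0 < ?hk k" for k using assms by simp
  show "q + ?hk k \<le> q'" for k
  proof -
    have "inverse (real (Suc k)) \<le> 1" by (auto simp: inverse_le_1_iff)
    hence "?hk k \<le> (q' - q) * 1" using assms by (intro mult_left_mono) auto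
    thus ?thesis by simp
  qed
  show "?hk \<longlonglongrightarrow> 0"
    using tendsto_mult[OF tendsto_const LIMSEQ_inverse_real_of_nat, of "q' - q"] by simp
qed

section \<open>The energy identity for weak solutions\<close>

lemma linear_on_dom_closed:
  assumes "linear_on_dom D T" "x \<in> D" "y \<in> D"
  shows "x + y \<in> D" "x - y \<in> D" "c *\<^sub>R x \<in> D"
  using assms unfolding linear_on_dom_def by (auto simp: subspace_add subspace_diff subspace_scale)

lemma linear_on_dom_apply:
  assumes lin: "linear_on_dom D T" and x: "x \<in> D" and y: "y \<in> D"
  shows "T (x + y) = T x + T y" "T (x - y) = T x - T y" "T (c *\<^sub>R x) = c *\<^sub>R T x"
proof -
  have add: "\<And>x y. x \<in> D \<Longrightarrow> y \<in> D \<Longrightarrow> T (x + y) = T x + T y"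
    and scale: "\<And>c x. x \<in> D \<Longrightarrow> T (c *\<^sub>R x) = c *\<^sub>R T x"
    using lin unfolding linear_on_dom_def by auto
  show "T (x + y) = T x + T y" "T (c *\<^sub>R x) = c *\<^sub>R T x" using add scale x y by auto
  have "T (x + (-1) *\<^sub>R y) = T x + (-1) *\<^sub>R T y"
    using add[OF x linear_on_dom_closed(3)[OF lin y y]] scale[OF y] by presburger
  thus "T (x - y) = T x - T y" by (metis scaleR_minus1_left diff_conv_add_uminus)
qed

lemma has_vector_derivative_inner:
  assumes "(v has_vector_derivative v') (at x within X)" "(w has_vector_derivative w') (at x within X)"
  shows "((\<lambda>t. inner (v t) (w t)) has_vector_derivative inner (v x) w' + inner v' (w x)) (at x within X)"
  using has_derivative_inner[OF assms[unfolded has_vector_derivative_def]]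
  unfolding has_vector_derivative_def
  by (rule has_derivative_eq_rhs) (auto simp: algebra_simps fun_eq_iff)

definition quad_energy :: "(real \<Rightarrow> 'a::real_inner) \<Rightarrow> (real \<Rightarrow> 'a) \<Rightarrow> real \<Rightarrow> real" where
  "quad_energy v w t = (1/2) * ((norm (v t))\<^sup>2 + (norm (w t))\<^sup>2)"

lemma energy_eq_quad_energy: "energy S F u ut t = quad_energy (\<lambda>\<tau>. S (u \<tau>)) ut t - F (u t)"
  by (simp add: energy_def quad_energy_def)

lemma quad_energy_has_vector_derivative:
  assumes "(v has_vector_derivative v') (at t within X)" "(w has_vector_derivative w') (at t within X)"
  shows "(quad_energy v w has_vector_derivative inner (v t) v' + inner (w t) w') (at t within X)"
proof -
  have eq_fun: "quad_energy v w = (\<lambda>t. (1/2) * (inner (v t) (v t) + inner (w t) (w t)))"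
    by (simp add: fun_eq_iff quad_energy_def power2_norm_eq_inner)
  have D: "((\<lambda>t. (1/2) * (inner (v t) (v t) + inner (w t) (w t))) has_vector_derivative
      (1/2) * ((inner (v t) v' + inner v' (v t)) + (inner (w t) w' + inner w' (w t)))) (at t within X)"
    by (intro has_vector_derivative_mult_right has_vector_derivative_add has_vector_derivative_inner assms)
  have eq_val: "(1/2) * ((inner (v t) v' + inner v' (v t)) + (inner (w t) w' + inner w' (w t)))
      = inner (v t) v' + inner (w t) w'"
    by (simp add: inner_commute)
  show ?thesis unfolding eq_fun using D unfolding eq_val .
qed

lemma weak_sol_steklov_identity:
  fixes u ut :: "real \<Rightarrow> 'h::{real_inner,complete_space}"
    and S f :: "'h \<Rightarrow> 'h" and Dmp :: "real \<Rightarrow> 'h \<Rightarrow> 'h"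
  defines "G \<equiv> \<lambda>\<tau>. f (u \<tau>) - Dmp \<tau> (ut \<tau>)"
  assumes ws: "weak_sol J DS S f Dmp u ut" and sub: "{p..q} \<subseteq> J"
    and Gc: "continuous_on {p..q} G" and phi: "phi \<in> DS"
    and t: "p \<le> t" "t + h \<le> q" and h: "0 < h"
  shows "inner (ut (t+h) - ut t) phi
           = h * inner (steklov_avg h G t) phi - h * inner (steklov_avg h (\<lambda>\<tau>. S (u \<tau>)) t) (S phi)"
proof -
  let ?Su = "\<lambda>\<tau>. S (u \<tau>)"
  have tJ: "t \<in> J" "t + h \<in> J" using t h sub by auto
  have Suc: "continuous_on {p..q} ?Su" using ws sub unfolding weak_sol_def by (meson continuous_on_subset)
  have W: "((\<lambda>\<tau>. inner (f (u \<tau>)) phi - inner (S (u \<tau>)) (S phi) - inner (Dmp \<tau> (ut \<tau>)) phi)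
      has_integral (inner (ut (t+h)) phi - inner (ut t) phi)) {t..t+h}"
    using ws phi tJ h unfolding weak_sol_def by auto
  have "((\<lambda>\<tau>. inner (G \<tau>) phi - inner (?Su \<tau>) (S phi)) has_integral
      (h * inner (steklov_avg h G t) phi - h * inner (steklov_avg h ?Su t) (S phi))) {t..t+h}"
    using has_integral_inner_steklov_avg[OF Gc t h] has_integral_inner_steklov_avg[OF Suc t h]
    by (rule has_integral_diff)
  moreover have "inner (G \<tau>) phi - inner (?Su \<tau>) (S phi)
      = inner (f (u \<tau>)) phi - inner (S (u \<tau>)) (S phi) - inner (Dmp \<tau> (ut \<tau>)) phi" for \<tau>
    by (simp add: G_def inner_diff_left)
  ultimately show ?thesis
    using has_integral_unique[OF W] by (simp add: inner_diff_left)
qed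

lemma has_integral_steklov_energy:
  fixes u ut :: "real \<Rightarrow> 'h::{real_inner,complete_space}"
    and S f :: "'h \<Rightarrow> 'h" and Dmp :: "real \<Rightarrow> 'h \<Rightarrow> 'h"
  defines "G \<equiv> \<lambda>\<tau>. f (u \<tau>) - Dmp \<tau> (ut \<tau>)" and "Su \<equiv> \<lambda>\<tau>. S (u \<tau>)"
  assumes lin: "linear_on_dom DS S"
    and ws: "weak_sol J DS S f Dmp u ut" and sub: "{p..q'} \<subseteq> J"
    and Gc: "continuous_on {p..q'} G" and pq: "p \<le> q" and h: "0 < h" "q + h \<le> q'"
  shows "((\<lambda>t. inner (steklov_avg h G t) (steklov_avg h ut t)) has_integral
           (quad_energy (steklov_avg h Su) (steklov_avg h ut) q
              - quad_energy (steklov_avg h Su) (steklov_avg h ut) p)) {p..q}"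
proof (rule fundamental_theorem_of_calculus[OF pq])
  from ws have uD: "\<And>t. t \<in> J \<Longrightarrow> u t \<in> DS"
    and ud: "\<And>t. t \<in> J \<Longrightarrow> (u has_vector_derivative ut t) (at t within J)"
    and Suc: "continuous_on {p..q'} Su" and utc: "continuous_on {p..q'} ut"
    unfolding weak_sol_def Su_def using sub by (auto intro: continuous_on_subset)
  fix t assume t: "t \<in> {p..q}"
  have tJ: "t \<in> J" "t + h \<in> J" using t h sub by auto
  define phi where "phi = steklov_avg h ut t"
  have phi_eq: "phi = (1/h) *\<^sub>R (u (t+h) - u t)"
  proof (unfold phi_def, rule steklov_avg_of_derivative[OF _ h(1)])
    fix x assume "x \<in> {t..t+h}"
    moreover have "{t..t+h} \<subseteq> J" using t h sub by auto
    ultimately show "(u has_vector_derivative ut x) (at x within {t..t+h})"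
      using ud has_vector_derivative_within_subset by blast
  qed
  have dif: "u (t+h) - u t \<in> DS" by (rule linear_on_dom_closed(2)[OF lin uD[OF tJ(2)] uD[OF tJ(1)]])
  have phiD: "phi \<in> DS" unfolding phi_eq by (rule linear_on_dom_closed(3)[OF lin dif dif])
  have Sphi: "S phi = (1/h) *\<^sub>R (Su (t+h) - Su t)"
    unfolding phi_eq Su_def linear_on_dom_apply(3)[OF lin dif dif]
      linear_on_dom_apply(2)[OF lin uD[OF tJ(2)] uD[OF tJ(1)]] ..
  have "inner phi ((1/h) *\<^sub>R (ut (t+h) - ut t)) = (1/h) * inner (ut (t+h) - ut t) phi"
    by (simp add: inner_commute)
  also have "\<dots> = inner (steklov_avg h G t) phi - inner (steklov_avg h Su t) (S phi)"
    using weak_sol_steklov_identity[OF ws sub _ phiD, where t=t and h=h] Gc t h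
    by (simp add: G_def Su_def field_simps)
  finally have "inner (steklov_avg h Su t) ((1/h) *\<^sub>R (Su (t+h) - Su t))
      + inner phi ((1/h) *\<^sub>R (ut (t+h) - ut t)) = inner (steklov_avg h G t) phi"
    by (simp add: Sphi)
  moreover have "(quad_energy (steklov_avg h Su) (steklov_avg h ut) has_vector_derivative
      inner (steklov_avg h Su t) ((1/h) *\<^sub>R (Su (t+h) - Su t))
        + inner phi ((1/h) *\<^sub>R (ut (t+h) - ut t))) (at t within {p..q})"
    unfolding phi_def
    by (intro quad_energy_has_vector_derivative steklov_avg_has_vector_derivative[OF _ t h(2,1)] Suc utc)
  ultimately show "(quad_energy (steklov_avg h Su) (steklov_avg h ut) has_vector_derivative
      inner (steklov_avg h G t) (steklov_avg h ut t)) (at t within {p..q})"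
    by (simp add: phi_def)
qed

lemma steklov_quad_energy_tendsto:
  fixes v w :: "real \<Rightarrow> 'h::{real_inner,complete_space}"
  assumes "continuous_on {p..q'} v" "continuous_on {p..q'} w" "t \<in> {p..q}"
    and "\<And>k. 0 < hk k" "\<And>k. q + hk k \<le> q'" "hk \<longlonglongrightarrow> 0"
  shows "(\<lambda>k. quad_energy (steklov_avg (hk k) v) (steklov_avg (hk k) w) t) \<longlonglongrightarrow> quad_energy v w t"
  unfolding quad_energy_def
  by (intro tendsto_intros steklov_avg_tendsto[OF assms(1,3-6)] steklov_avg_tendsto[OF assms(2-6)])

lemma has_integral_quad_energy:
  fixes u ut :: "real \<Rightarrow> 'h::{real_inner,complete_space}"
    and S f :: "'h \<Rightarrow> 'h" and Dmp :: "real \<Rightarrow> 'h \<Rightarrow> 'h"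
  defines "G \<equiv> \<lambda>\<tau>. f (u \<tau>) - Dmp \<tau> (ut \<tau>)" and "Su \<equiv> \<lambda>\<tau>. S (u \<tau>)"
  assumes lin: "linear_on_dom DS S"
    and ws: "weak_sol J DS S f Dmp u ut" and sub: "{p..q'} \<subseteq> J"
    and Gc: "continuous_on {p..q'} G" and pq: "p \<le> q" and qq: "q < q'"
  shows "((\<lambda>t. inner (G t) (ut t)) has_integral (quad_energy Su ut q - quad_energy Su ut p)) {p..q}"
proof -
  have Suc: "continuous_on {p..q'} Su" and utc: "continuous_on {p..q'} ut"
    using ws sub unfolding weak_sol_def Su_def by (auto intro: continuous_on_subset)
  obtain hk where hk: "\<And>k. 0 < hk k" "\<And>k. q + hk k \<le> q'" "hk \<longlonglongrightarrow> 0"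
    using obtain_vanishing_widths[OF qq] by blast
  have "bounded (G ` {p..q'})" "bounded (ut ` {p..q'})"
    by (intro compact_imp_bounded compact_continuous_image Gc utc compact_Icc)+
  then obtain MG MU where MG: "\<And>x. x \<in> {p..q'} \<Longrightarrow> norm (G x) \<le> MG"
    and MU: "\<And>x. x \<in> {p..q'} \<Longrightarrow> norm (ut x) \<le> MU"
    unfolding bounded_iff by blast
  have MU0: "0 \<le> MU" using MU[of p] pq qq by (meson atLeastAtMost_iff dual_order.trans less_imp_le norm_ge_zero order_refl)
  define \<psi> where "\<psi> k t = inner (steklov_avg (hk k) G t) (steklov_avg (hk k) ut t)" for k t
  have RE: "(\<psi> k has_integral (quad_energy (steklov_avg (hk k) Su) (steklov_avg (hk k) ut) q
      - quad_energy (steklov_avg (hk k) Su) (steklov_avg (hk k) ut) p)) {p..q}" for k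
    unfolding \<psi>_def G_def Su_def
    by (rule has_integral_steklov_energy[OF lin ws sub _ pq hk(1,2)]) (use Gc in \<open>simp add: G_def\<close>)
  have bnd: "norm (\<psi> k x) \<le> MG * MU" if x: "x \<in> {p..q}" for k x
  proof -
    have "norm (steklov_avg (hk k) G x - 0) \<le> MG"
      by (rule norm_steklov_avg_diff_le[OF Gc]) (use x hk(1,2)[of k] MG in auto)
    moreover have "norm (steklov_avg (hk k) ut x - 0) \<le> MU"
      by (rule norm_steklov_avg_diff_le[OF utc]) (use x hk(1,2)[of k] MU in auto)
    ultimately have "norm (steklov_avg (hk k) G x) * norm (steklov_avg (hk k) ut x) \<le> MG * MU"
      using MU0 by (auto intro: mult_mono')
    thus ?thesis unfolding \<psi>_def real_norm_def using Cauchy_Schwarz_ineq2 order_trans by blast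
  qed
  have conv: "(\<lambda>k. \<psi> k x) \<longlonglongrightarrow> inner (G x) (ut x)" if "x \<in> {p..q}" for x
    unfolding \<psi>_def
    by (intro tendsto_inner steklov_avg_tendsto[OF Gc that hk] steklov_avg_tendsto[OF utc that hk])
  have DC: "(\<lambda>k. integral {p..q} (\<psi> k)) \<longlonglongrightarrow> integral {p..q} (\<lambda>x. inner (G x) (ut x))"
    "(\<lambda>x. inner (G x) (ut x)) integrable_on {p..q}"
    using dominated_convergence[of \<psi> "{p..q}" "\<lambda>x. MG * MU", OF has_integral_integrable[OF RE]
        integrable_const_ivl bnd conv]
    by auto
  have "(\<lambda>k. integral {p..q} (\<psi> k)) \<longlonglongrightarrow> quad_energy Su ut q - quad_energy Su ut p"
    unfolding integral_unique[OF RE] using pq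
    by (intro tendsto_diff steklov_quad_energy_tendsto[OF Suc utc _ hk]) auto
  with DC show ?thesis
    by (metis LIMSEQ_unique has_integral_integral)
qed

section \<open>The nonlinearity along a solution\<close>

lemma loc_lipschitz_V_tendsto:
  assumes lin: "linear_on_dom DS S" and flip: "loc_lipschitz_V DS S f" and x: "x \<in> DS"
    and vD: "eventually (\<lambda>y. v y \<in> DS) net" and Sv: "((\<lambda>y. S (v y)) \<longlongrightarrow> S x) net"
  shows "((\<lambda>y. f (v y)) \<longlongrightarrow> f x) net"
proof -
  define r where "r = norm (S x) + 1"
  have "0 < r" unfolding r_def by (simp add: add_nonneg_pos)
  then obtain L where L: "\<And>x y. x \<in> DS \<Longrightarrow> y \<in> DS \<Longrightarrow> norm (S x) \<le> r \<Longrightarrow> norm (S y) \<le> r \<Longrightarrow>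
      norm (f x - f y) \<le> L * norm (S (x - y))"
    using flip unfolding loc_lipschitz_V_def by blast
  have ev: "eventually (\<lambda>y. norm (f (v y) - f x) \<le> \<bar>L\<bar> * norm (S (v y) - S x)) net"
    using eventually_conj[OF vD tendstoD[OF Sv zero_less_one]]
  proof (rule eventually_mono)
    fix y assume y: "v y \<in> DS \<and> dist (S (v y)) (S x) < 1"
    have r_y: "norm (S (v y)) \<le> r"
      using y norm_triangle_ineq2[of "S (v y)" "S x"] unfolding r_def dist_norm by linarith
    have "norm (f (v y) - f x) \<le> L * norm (S (v y - x))"
      by (rule L[OF conjunct1[OF y] x r_y]) (simp add: r_def)
    also have "\<dots> \<le> \<bar>L\<bar> * norm (S (v y) - S x)"
      using linear_on_dom_apply(2)[OF lin conjunct1[OF y] x] by (simp add: mult_right_mono)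
    finally show "norm (f (v y) - f x) \<le> \<bar>L\<bar> * norm (S (v y) - S x)" .
  qed
  moreover have "((\<lambda>y. \<bar>L\<bar> * norm (S (v y) - S x)) \<longlongrightarrow> 0) net"
    using tendsto_mult_right_zero[OF tendsto_norm_zero[OF Sv[THEN LIM_zero]]] .
  ultimately have "((\<lambda>y. f (v y) - f x) \<longlongrightarrow> 0) net"
    by (rule Lim_null_comparison)
  thus ?thesis by (rule LIM_zero_cancel)
qed

lemma continuous_on_loc_lipschitz_V:
  assumes lin: "linear_on_dom DS S" and flip: "loc_lipschitz_V DS S f"
    and uD: "\<And>t. t \<in> J \<Longrightarrow> u t \<in> DS" and Suc: "continuous_on J (\<lambda>t. S (u t))"
  shows "continuous_on J (\<lambda>t. f (u t))"
  unfolding continuous_on_def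
proof
  fix t assume t: "t \<in> J"
  have "eventually (\<lambda>y. u y \<in> DS) (at t within J)"
    unfolding eventually_at_filter by (rule always_eventually) (auto intro: uD)
  with Suc t show "((\<lambda>y. f (u y)) \<longlongrightarrow> f (u t)) (at t within J)"
    by (intro loc_lipschitz_V_tendsto[OF lin flip uD[OF t]]) (auto simp: continuous_on_def)
qed

lemma V_derivative_along_line:
  assumes lin: "linear_on_dom DS S" and Fd: "V_derivative DS S F f" and w: "w \<in> DS" and z: "z \<in> DS"
  shows "((\<lambda>y. F (w + y *\<^sub>R z)) has_field_derivative inner (f (w + s *\<^sub>R z)) z) (at s)"
proof -
  let ?v = "\<lambda>y. w + y *\<^sub>R z"
  let ?N = "norm (S z) + 1"
  have vD: "?v y \<in> DS" for y
    by (rule linear_on_dom_closed(1)[OF lin w linear_on_dom_closed(3)[OF lin z z]])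
  have dv: "?v y - ?v s = (y - s) *\<^sub>R z" for y by (simp add: algebra_simps)
  have Sdv: "norm (S (?v y - ?v s)) = \<bar>y - s\<bar> * norm (S z)" for y
    unfolding dv linear_on_dom_apply(3)[OF lin z z] by simp
  show ?thesis unfolding has_field_derivative_iff
  proof (rule tendstoI)
    fix e :: real assume e: "0 < e"
    have "0 < e / (2 * ?N)" using e by (simp add: add_nonneg_pos)
    then obtain d where d: "0 < d" and rem: "\<And>v. v \<in> DS \<Longrightarrow> norm (S (v - ?v s)) < d \<Longrightarrow>
        \<bar>F v - F (?v s) - inner (f (?v s)) (v - ?v s)\<bar> \<le> e / (2 * ?N) * norm (S (v - ?v s))"
      using Fd vD unfolding V_derivative_def by blast
    show "eventually (\<lambda>y. dist ((F (?v y) - F (?v s)) / (y - s)) (inner (f (?v s)) z) < e) (at s)"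
      unfolding eventually_at
    proof (intro exI[of _ "d / ?N"] conjI ballI impI)
      show "0 < d / ?N" using d by (simp add: add_nonneg_pos)
      fix y assume y: "y \<noteq> s \<and> dist y s < d / ?N"
      have N: "0 < ?N" by (simp add: add_nonneg_pos)
      hence ys: "0 < \<bar>y - s\<bar>" and yd: "\<bar>y - s\<bar> * ?N < d"
        using y by (auto simp: dist_real_def pos_less_divide_eq)
      have "\<bar>y - s\<bar> * norm (S z) \<le> \<bar>y - s\<bar> * ?N" by (intro mult_left_mono) auto
      hence "norm (S (?v y - ?v s)) < d" unfolding Sdv using yd by linarith
      define A where "A = F (?v y) - F (?v s)"
      define c where "c = inner (f (?v s)) z"
      have "\<bar>A - (y - s) * c\<bar> \<le> e / (2 * ?N) * (\<bar>y - s\<bar> * norm (S z))"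
        using rem[OF vD \<open>norm (S (?v y - ?v s)) < d\<close>, unfolded Sdv, unfolded dv]
        by (simp add: A_def c_def)
      also have "\<dots> \<le> e / (2 * ?N) * (\<bar>y - s\<bar> * ?N)"
        using e N by (intro mult_left_mono) auto
      also have "\<dots> = e / 2 * \<bar>y - s\<bar>" using N by (simp add: field_simps)
      finally have "\<bar>A - (y - s) * c\<bar> / \<bar>y - s\<bar> \<le> e / 2" using ys by (simp add: pos_divide_le_eq)
      moreover have "A / (y - s) - c = (A - (y - s) * c) / (y - s)" using ys by (simp add: field_simps)
      ultimately have "\<bar>A / (y - s) - c\<bar> \<le> e / 2" by (simp add: abs_divide)
      thus "dist ((F (?v y) - F (?v s)) / (y - s)) (inner (f (?v s)) z) < e"
        using e by (simp add: dist_real_def A_def c_def)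
    qed
  qed
qed

lemma V_derivative_mean_value:
  assumes lin: "linear_on_dom DS S" and Fd: "V_derivative DS S F f" and w: "w \<in> DS" and z: "z \<in> DS"
  obtains \<xi> where "0 \<le> \<xi>" "\<xi> \<le> 1" "F (w + z) - F w = inner (f (w + \<xi> *\<^sub>R z)) z"
proof -
  have "\<exists>\<xi>>0. \<xi> < 1 \<and> F (w + 1 *\<^sub>R z) - F (w + 0 *\<^sub>R z) = (1 - 0) * inner (f (w + \<xi> *\<^sub>R z)) z"
    by (rule MVT2) (use V_derivative_along_line[OF lin Fd w z] in auto)
  then obtain \<xi> where \<xi>: "0 < \<xi>" "\<xi> < 1" "F (w + z) - F w = inner (f (w + \<xi> *\<^sub>R z)) z"
    by auto
  show ?thesis by (rule that[OF _ _ \<xi>(3)]) (use \<xi> in auto)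
qed

lemma difference_quotient_tendsto:
  fixes u :: "real \<Rightarrow> 'a::real_normed_vector"
  assumes "(u has_vector_derivative u') (at t within J)"
  shows "((\<lambda>y. (1 / (y - t)) *\<^sub>R (u y - u t)) \<longlongrightarrow> u') (at t within J)"
proof -
  have "((\<lambda>y. (1 / norm (y - t)) *\<^sub>R (u y - (u t + (y - t) *\<^sub>R u'))) \<longlongrightarrow> 0) (at t within J)"
    using assms unfolding has_vector_derivative_def has_derivative_within by blast
  from tendsto_norm_zero[OF this]
  have "((\<lambda>y. (1 / (y - t)) *\<^sub>R (u y - u t) - u') \<longlongrightarrow> 0) (at t within J)"
  proof (rule Lim_null_comparison[rotated])
    have "norm ((1 / (y - t)) *\<^sub>R (u y - u t) - u') = norm ((1 / norm (y - t)) *\<^sub>R (u y - (u t + (y - t) *\<^sub>R u')))"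
      if "y \<noteq> t" for y
    proof -
      have "(1 / (y - t)) *\<^sub>R (u y - u t) - u' = (1 / (y - t)) *\<^sub>R (u y - (u t + (y - t) *\<^sub>R u'))"
        using that by (simp add: scaleR_diff_right scaleR_add_right diff_diff_eq[symmetric])
      thus ?thesis by simp
    qed
    thus "eventually (\<lambda>y. norm ((1 / (y - t)) *\<^sub>R (u y - u t) - u') \<le>
        norm ((1 / norm (y - t)) *\<^sub>R (u y - (u t + (y - t) *\<^sub>R u')))) (at t within J)"
      unfolding eventually_at_filter by (intro always_eventually) auto
  qed
  thus ?thesis by (rule LIM_zero_cancel)
qed

lemma V_derivative_chain:
  assumes lin: "linear_on_dom DS S" and flip: "loc_lipschitz_V DS S f" and Fd: "V_derivative DS S F f"
    and uD: "\<And>t. t \<in> J \<Longrightarrow> u t \<in> DS" and Suc: "continuous_on J (\<lambda>t. S (u t))"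
    and ud: "(u has_vector_derivative u') (at t within J)" and t: "t \<in> J"
  shows "((\<lambda>t. F (u t)) has_field_derivative inner (f (u t)) u') (at t within J)"
proof -
  have dD: "u y - u t \<in> DS" if "y \<in> J" for y by (rule linear_on_dom_closed(2)[OF lin uD[OF that] uD[OF t]])
  have "\<forall>y\<in>J. \<exists>\<xi>. 0 \<le> \<xi> \<and> \<xi> \<le> 1 \<and> F (u y) - F (u t) = inner (f (u t + \<xi> *\<^sub>R (u y - u t))) (u y - u t)"
  proof
    fix y assume "y \<in> J"
    from V_derivative_mean_value[OF lin Fd uD[OF t] dD[OF this]]
    show "\<exists>\<xi>. 0 \<le> \<xi> \<and> \<xi> \<le> 1 \<and> F (u y) - F (u t) = inner (f (u t + \<xi> *\<^sub>R (u y - u t))) (u y - u t)"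
      by (metis add.commute diff_add_cancel)
  qed
  then obtain \<xi> where \<xi>: "\<And>y. y \<in> J \<Longrightarrow> 0 \<le> \<xi> y \<and> \<xi> y \<le> 1 \<and>
      F (u y) - F (u t) = inner (f (u t + \<xi> y *\<^sub>R (u y - u t))) (u y - u t)"
    by metis
  define M where "M y = u t + \<xi> y *\<^sub>R (u y - u t)" for y
  have MD: "M y \<in> DS" and SM: "norm (S (M y) - S (u t)) \<le> norm (S (u y) - S (u t))" if y: "y \<in> J" for y
  proof -
    have sD: "\<xi> y *\<^sub>R (u y - u t) \<in> DS" by (rule linear_on_dom_closed(3)[OF lin dD[OF y] dD[OF y]])
    show "M y \<in> DS" unfolding M_def by (rule linear_on_dom_closed(1)[OF lin uD[OF t] sD])
    have "S (M y) - S (u t) = \<xi> y *\<^sub>R (S (u y) - S (u t))"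
      unfolding M_def linear_on_dom_apply(1)[OF lin uD[OF t] sD] linear_on_dom_apply(3)[OF lin dD[OF y] dD[OF y]]
        linear_on_dom_apply(2)[OF lin uD[OF y] uD[OF t]] by simp
    thus "norm (S (M y) - S (u t)) \<le> norm (S (u y) - S (u t))"
      using \<xi>[OF y] by (simp add: mult_left_le_one_le)
  qed
  have evJ: "eventually (\<lambda>y. y \<in> J) (at t within J)"
    unfolding eventually_at_filter by (rule always_eventually) auto
  have Sut: "((\<lambda>y. S (u y)) \<longlongrightarrow> S (u t)) (at t within J)"
    using Suc t unfolding continuous_on_def by blast
  have "eventually (\<lambda>y. norm (S (M y) - S (u t)) \<le> norm (S (u y) - S (u t))) (at t within J)"
    using evJ SM by (auto elim: eventually_mono)
  hence "((\<lambda>y. S (M y) - S (u t)) \<longlongrightarrow> 0) (at t within J)"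
    by (rule Lim_null_comparison) (rule tendsto_norm_zero[OF LIM_zero[OF Sut]])
  hence "((\<lambda>y. S (M y)) \<longlongrightarrow> S (u t)) (at t within J)" by (rule LIM_zero_cancel)
  moreover have "eventually (\<lambda>y. M y \<in> DS) (at t within J)"
    using evJ MD by (auto elim: eventually_mono)
  ultimately have "((\<lambda>y. f (M y)) \<longlongrightarrow> f (u t)) (at t within J)"
    by (intro loc_lipschitz_V_tendsto[OF lin flip uD[OF t]])
  from tendsto_inner[OF this difference_quotient_tendsto[OF ud]]
  show ?thesis unfolding has_field_derivative_iff
  proof (rule Lim_transform_eventually)
    show "eventually (\<lambda>y. inner (f (M y)) ((1 / (y - t)) *\<^sub>R (u y - u t)) = (F (u y) - F (u t)) / (y - t))
        (at t within J)"
      using \<xi> unfolding eventually_at_filter M_def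
      by (intro always_eventually) (simp add: divide_inverse mult.commute)
  qed
qed

section \<open>Energy dissipation\<close>

lemma has_integral_energy_dissipation:
  fixes u ut :: "real \<Rightarrow> 'h::{real_inner,complete_space}"
  assumes lin: "linear_on_dom DS S" and flip: "loc_lipschitz_V DS S f" and Fd: "V_derivative DS S F f"
    and ws: "weak_sol J DS S f Dmp u ut" and sub: "{p..q'} \<subseteq> J"
    and Dc: "continuous_on {p..q'} (\<lambda>\<tau>. Dmp \<tau> (ut \<tau>))" and pq: "p \<le> q" and qq: "q < q'"
  shows "((\<lambda>\<tau>. - inner (Dmp \<tau> (ut \<tau>)) (ut \<tau>)) has_integral
           (energy S F u ut q - energy S F u ut p)) {p..q}"
proof -
  from ws have uD: "\<And>t. t \<in> J \<Longrightarrow> u t \<in> DS" and Suc: "continuous_on J (\<lambda>t. S (u t))"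
    and ud: "\<And>t. t \<in> J \<Longrightarrow> (u has_vector_derivative ut t) (at t within J)"
    unfolding weak_sol_def by auto
  have "continuous_on {p..q'} (\<lambda>t. f (u t))"
    using continuous_on_subset[OF continuous_on_loc_lipschitz_V[OF lin flip uD Suc] sub] .
  hence "continuous_on {p..q'} (\<lambda>\<tau>. f (u \<tau>) - Dmp \<tau> (ut \<tau>))"
    by (intro continuous_on_diff Dc)
  from has_integral_quad_energy[OF lin ws sub this pq qq]
  have Q: "((\<lambda>t. inner (f (u t) - Dmp t (ut t)) (ut t)) has_integral
      (quad_energy (\<lambda>\<tau>. S (u \<tau>)) ut q - quad_energy (\<lambda>\<tau>. S (u \<tau>)) ut p)) {p..q}" .
  have "((\<lambda>t. F (u t)) has_vector_derivative inner (f (u x)) (ut x)) (at x within {p..q})"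
    if "x \<in> {p..q}" for x
  proof -
    have x: "x \<in> J" and "{p..q} \<subseteq> J" using that sub qq by auto
    with V_derivative_chain[OF lin flip Fd uD Suc ud[OF x] x] show ?thesis
      by (simp add: has_real_derivative_iff_has_vector_derivative[symmetric] has_field_derivative_subset)
  qed
  from has_integral_diff[OF Q fundamental_theorem_of_calculus[OF pq this]] show ?thesis
    by (simp add: energy_eq_quad_energy inner_diff_left algebra_simps)
qed

lemma continuous_on_energy:
  assumes lin: "linear_on_dom DS S" and flip: "loc_lipschitz_V DS S f" and Fd: "V_derivative DS S F f"
    and ws: "weak_sol J DS S f Dmp u ut" and sub: "X \<subseteq> J"
  shows "continuous_on X (energy S F u ut)"
proof -
  from ws have uD: "\<And>t. t \<in> J \<Longrightarrow> u t \<in> DS" and Suc: "continuous_on J (\<lambda>t. S (u t))"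
    and ud: "\<And>t. t \<in> J \<Longrightarrow> (u has_vector_derivative ut t) (at t within J)"
    and utc: "continuous_on J ut"
    unfolding weak_sol_def by auto
  have "continuous_on X (\<lambda>t. F (u t))"
  proof (rule DERIV_continuous_on)
    fix x assume "x \<in> X"
    hence x: "x \<in> J" using sub by auto
    from V_derivative_chain[OF lin flip Fd uD Suc ud[OF x] x] sub
    show "((\<lambda>t. F (u t)) has_field_derivative inner (f (u x)) (ut x)) (at x within X)"
      by (meson has_field_derivative_subset subsetD)
  qed
  thus ?thesis unfolding energy_def
    by (intro continuous_intros continuous_on_subset[OF utc sub] continuous_on_subset[OF Suc sub])
qed

text \<open>The damping need only be continuous on \<open>[a, b)\<close>: the identity holds on every \<open>[a, q]\<close>
  with \<open>q < b\<close> and extends to \<open>b\<close> by continuity of the energy.\<close>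

lemma energy_dissipation_identity:
  fixes u ut :: "real \<Rightarrow> 'h::{real_inner,complete_space}"
  assumes lin: "linear_on_dom DS S" and flip: "loc_lipschitz_V DS S f" and Fd: "V_derivative DS S F f"
    and ws: "weak_sol J DS S f Dmp u ut" and sub: "{a..b} \<subseteq> J" and ab: "a < b"
    and Dc: "\<And>q'. q' < b \<Longrightarrow> continuous_on {a..q'} (\<lambda>\<tau>. Dmp \<tau> (ut \<tau>))"
    and c: "\<And>x. x \<in> {a<..<b} \<Longrightarrow> inner (Dmp x (ut x)) (ut x) = c x"
  shows "(c has_integral (energy S F u ut a - energy S F u ut b)) {a..b}"
proof -
  let ?E = "energy S F u ut"
  let ?c = "\<lambda>\<tau>. - inner (Dmp \<tau> (ut \<tau>)) (ut \<tau>)"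
  have der: "(?E has_vector_derivative - c t) (at t)" if t: "t \<in> {a<..<b}" for t
  proof -
    define q where "q = (t + b) / 2"
    define q' where "q' = (q + b) / 2"
    have tq: "a < t" "t < q" "q < q'" "q' < b" using t unfolding q_def q'_def by auto
    have sub': "{a..q'} \<subseteq> J" using sub tq by auto
    have "{a..q} \<subseteq> {a..q'}" "{a..q} \<subseteq> J" using sub' tq by auto
    hence "continuous_on {a..q} (\<lambda>\<tau>. Dmp \<tau> (ut \<tau>))" "continuous_on {a..q} ut"
      using Dc[OF tq(4)] ws unfolding weak_sol_def by (meson continuous_on_subset)+
    hence "continuous_on {a..q} ?c" by (intro continuous_intros)
    from integral_has_vector_derivative[OF this, of t] tq
    have "((\<lambda>y. integral {a..y} ?c) has_field_derivative ?c t) (at t)"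
      by (simp add: at_within_Icc_at has_real_derivative_iff_has_vector_derivative)
    from DERIV_add[OF DERIV_const[of "?E a"] this]
    have D: "((\<lambda>y. ?E a + integral {a..y} ?c) has_field_derivative ?c t) (at t)"
      by (simp only: add_0_left)
    have eq: "?E a + integral {a..y} ?c = ?E y" if "y \<in> {a<..<q}" for y
      using integral_unique[OF has_integral_energy_dissipation[OF lin flip Fd ws sub' Dc[OF tq(4)]]]
        that tq by simp
    have "(?E has_field_derivative ?c t) (at t)"
      by (rule has_field_derivative_transform_within_open[OF D, of "{a<..<q}"]) (use tq eq in auto)
    thus ?thesis using c[OF t] by (simp add: has_real_derivative_iff_has_vector_derivative)
  qed
  have "((\<lambda>x. - c x) has_integral (?E b - ?E a)) {a..b}"
    by (rule fundamental_theorem_of_calculus_interior_strong[OF finite.emptyI])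
       (use ab der continuous_on_energy[OF lin flip Fd ws sub] in auto)
  from has_integral_neg[OF this] show ?thesis by simp
qed

section \<open>Intervals without antidamping\<close>

lemma norm_adjoint_le:
  fixes C :: "'u::real_inner \<Rightarrow>\<^sub>L 'h::real_inner"
  assumes "is_adjoint C Cs"
  shows "norm Cs \<le> norm C"
proof (rule norm_blinfun_bound)
  fix y
  have "(norm (Cs y))\<^sup>2 = inner (C (Cs y)) y"
    using assms unfolding is_adjoint_def by (simp add: power2_norm_eq_inner)
  also have "\<dots> \<le> norm (C (Cs y)) * norm y" by (rule norm_cauchy_schwarz)
  also have "\<dots> \<le> norm C * norm (Cs y) * norm y" by (intro mult_right_mono norm_blinfun) auto
  finally have "norm (Cs y) * norm (Cs y) \<le> (norm C * norm y) * norm (Cs y)"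
    by (simp add: power2_eq_square algebra_simps)
  thus "norm (Cs y) \<le> norm C * norm y"
    by (cases "norm (Cs y) = 0") simp_all
qed simp

lemma is_adjoint_diff:
  assumes "is_adjoint B Bs" "is_adjoint B' Bs'"
  shows "is_adjoint (B - B') (Bs - Bs')"
  using assms unfolding is_adjoint_def by (simp add: blinfun.diff_left inner_diff_left inner_diff_right)

lemma continuous_on_adjoint:
  fixes B :: "real \<Rightarrow> ('u::real_inner \<Rightarrow>\<^sub>L 'h::real_inner)"
  assumes adj: "\<And>t. is_adjoint (B t) (Bs t)" and c: "continuous_on X B"
  shows "continuous_on X Bs"
  unfolding continuous_on_def
proof
  fix x assume "x \<in> X"
  with c have "(B \<longlongrightarrow> B x) (at x within X)" unfolding continuous_on_def by blast
  thus "(Bs \<longlongrightarrow> Bs x) (at x within X)"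
  proof (rule metric_tendsto_imp_tendsto)
    show "eventually (\<lambda>y. dist (Bs y) (Bs x) \<le> dist (B y) (B x)) (at x within X)"
      by (rule always_eventually) (auto simp: dist_norm intro: norm_adjoint_le is_adjoint_diff adj)
  qed
qed

lemma weak_sol_restrict:
  assumes ws: "weak_sol J DS S f Dmp u ut" and sub: "{a..b} \<subseteq> J"
    and eq: "\<And>\<tau> x. \<tau> \<in> {a..<b} \<Longrightarrow> Dmp' \<tau> x = Dmp \<tau> x"
  shows "weak_sol {a..b} DS S f Dmp' u ut"
  unfolding weak_sol_def
proof (intro conjI ballI impI)
  show "u t \<in> DS" if "t \<in> {a..b}" for t
    using ws sub that unfolding weak_sol_def by auto
  show "(u has_vector_derivative ut t) (at t within {a..b})" if "t \<in> {a..b}" for t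
    using ws sub that unfolding weak_sol_def by (meson has_vector_derivative_within_subset subsetD)
  show "continuous_on {a..b} u" "continuous_on {a..b} (\<lambda>t. S (u t))" "continuous_on {a..b} ut"
    using ws sub unfolding weak_sol_def by (meson continuous_on_subset)+
  fix phi s t assume "phi \<in> DS" "s \<in> {a..b}" "t \<in> {a..b}" "s \<le> t"
  with ws sub have "((\<lambda>\<tau>. inner (f (u \<tau>)) phi - inner (S (u \<tau>)) (S phi) - inner (Dmp \<tau> (ut \<tau>)) phi)
      has_integral (inner (ut t) phi - inner (ut s) phi)) {s..t}"
    unfolding weak_sol_def by blast
  thus "((\<lambda>\<tau>. inner (f (u \<tau>)) phi - inner (S (u \<tau>)) (S phi) - inner (Dmp' \<tau> (ut \<tau>)) phi)
      has_integral (inner (ut t) phi - inner (ut s) phi)) {s..t}"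
  proof (rule has_integral_spike_finite[of "{b}", rotated 2])
    fix x assume "x \<in> {s..t} - {b}"
    hence "x \<in> {a..<b}" using \<open>s \<in> {a..b}\<close> \<open>t \<in> {a..b}\<close> by auto
    thus "inner (f (u x)) phi - inner (S (u x)) (S phi) - inner (Dmp' x (ut x)) phi
        = inner (f (u x)) phi - inner (S (u x)) (S phi) - inner (Dmp x (ut x)) phi"
      using eq by simp
  qed simp
qed

lemma energy_dissipation_B1:
  fixes u ut :: "real \<Rightarrow> 'h::{real_inner,complete_space}"
    and B1 :: "real \<Rightarrow> ('u1::real_inner \<Rightarrow>\<^sub>L 'h)" and B1s :: "real \<Rightarrow> ('h \<Rightarrow>\<^sub>L 'u1)"
    and B3 :: "real \<Rightarrow> ('u3::real_inner \<Rightarrow>\<^sub>L 'h)" and B3s :: "real \<Rightarrow> ('h \<Rightarrow>\<^sub>L 'u3)"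
  assumes lin: "linear_on_dom DS S" and flip: "loc_lipschitz_V DS S f" and Fd: "V_derivative DS S F f"
    and ws: "weak_sol J DS S f (\<lambda>t x. B1 t (B1s t x) - B3 t (B3s t x)) u ut"
    and sub: "{a..b} \<subseteq> J" and ab: "a < b"
    and adj: "\<And>t. is_adjoint (B1 t) (B1s t)" and B3: "\<And>t. t \<in> {a..<b} \<Longrightarrow> B3 t = 0"
    and B1: "\<And>t. t \<in> {a..<b} \<Longrightarrow> B1 t = g t" and gc: "continuous_on {a..b} g"
  shows "((\<lambda>t. (norm (B1s t (ut t)))\<^sup>2) has_integral (energy S F u ut a - energy S F u ut b)) {a..b}"
proof (rule energy_dissipation_identity[OF lin flip Fd ws sub ab])
  fix q' assume "q' < b"
  hence sub': "{a..q'} \<subseteq> {a..b}" by auto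
  have "continuous_on {a..q'} g" by (rule continuous_on_subset[OF gc sub'])
  hence "continuous_on {a..q'} B1"
    by (rule continuous_on_cong[THEN iffD2, OF refl, rotated]) (use B1 \<open>q' < b\<close> in auto)
  moreover have "continuous_on {a..q'} ut"
    using ws sub' sub unfolding weak_sol_def by (meson continuous_on_subset order.trans)
  ultimately have "continuous_on {a..q'} (\<lambda>\<tau>. B1 \<tau> (B1s \<tau> (ut \<tau>)))"
    by (intro continuous_intros continuous_on_adjoint[OF adj])
  thus "continuous_on {a..q'} (\<lambda>\<tau>. B1 \<tau> (B1s \<tau> (ut \<tau>)) - B3 \<tau> (B3s \<tau> (ut \<tau>)))"
    by (rule continuous_on_cong[THEN iffD2, OF refl, rotated]) (use B3 \<open>q' < b\<close> in auto)
next
  fix x assume "x \<in> {a<..<b}"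
  thus "inner (B1 x (B1s x (ut x)) - B3 x (B3s x (ut x))) (ut x) = (norm (B1s x (ut x)))\<^sup>2"
    using B3 adj[of x] unfolding is_adjoint_def by (simp add: power2_norm_eq_inner)
qed

lemma decay_of_dissipation_bound:
  fixes d Ea Eb :: real
  assumes "0 < d" "Eb \<le> d * (Ea - Eb)"
  shows "Eb \<le> d / (d + 1) * Ea"
  using assms by (simp add: field_simps)

theorem proposition4p2:
  fixes A S :: "'h::{real_inner,complete_space} \<Rightarrow> 'h"
    and DA DS :: "'h set"
    and B1 :: "real \<Rightarrow> ('u1::{real_inner,complete_space} \<Rightarrow>\<^sub>L 'h)"
    and B1s :: "real \<Rightarrow> ('h \<Rightarrow>\<^sub>L 'u1)"
    and B3 :: "real \<Rightarrow> ('u3::{real_inner,complete_space} \<Rightarrow>\<^sub>L 'h)"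
    and B3s :: "real \<Rightarrow> ('h \<Rightarrow>\<^sub>L 'u3)"
    and iota :: "'h \<Rightarrow> 'w::{real_inner,complete_space}"
    and C1 :: real
    and f :: "'h \<Rightarrow> 'h" and F :: "'h \<Rightarrow> real"
    and tt :: "nat \<Rightarrow> real" and Tbar :: "nat \<Rightarrow> real"
    and d :: "nat \<Rightarrow> real \<Rightarrow> real"
    and u ut :: "real \<Rightarrow> 'h"
  defines "TT \<equiv> \<lambda>n. tt (Suc n) - tt n"
  assumes A_sa: "self_adjoint_op DA A"
    and A_pos: "positive_op DA A"
    and A_coer: "coercive_op DA A"
    and S_sqrt: "is_op_sqrt DS S DA A"
    and B1_adj: "\<And>t. is_adjoint (B1 t) (B1s t)"
    and B3_adj: "\<And>t. is_adjoint (B3 t) (B3s t)"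
    and B13: "\<And>t. t > 0 \<Longrightarrow> B1s t o\<^sub>L B3 t = 0"
    and tt0: "tt 0 = 0" and tt_mono: "strict_mono tt"
    and B3_zero: "\<And>n t. t \<in> {tt (2*n)..<tt (2*n+1)} \<Longrightarrow> B3 t = 0"
    and B1_zero: "\<And>n t. t \<in> {tt (2*n+1)..<tt (2*n+2)} \<Longrightarrow> B1 t = 0"
    and B1_C1: "\<And>n. \<exists>g g'. (\<forall>t\<in>{tt (2*n)..<tt (2*n+1)}. B1 t = g t) \<and>
                  (\<forall>t\<in>{tt (2*n)..tt (2*n+1)}.
                      (g has_vector_derivative g' t) (at t within {tt (2*n)..tt (2*n+1)})) \<and>
                  continuous_on {tt (2*n)..tt (2*n+1)} g'"
    and B3_C: "\<And>n. \<exists>g. (\<forall>t\<in>{tt (2*n+1)..<tt (2*n+2)}. B3 t = g t) \<and>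
                  continuous_on {tt (2*n+1)..tt (2*n+2)} g"
    and W1_emb: "linear iota" "inj iota" "\<And>x. (norm (iota x))\<^sup>2 \<le> C1 * (norm x)\<^sup>2"
    and f_lip: "loc_lipschitz_V DS S f"
    and F0: "F 0 = 0"
    and F_deriv: "V_derivative DS S F f"
    and cond_j: "\<And>n. \<exists>m M. 0 < m \<and> m \<le> M \<and>
                   (\<forall>x. \<forall>t\<in>{tt (2*n)..<tt (2*n+1)}.
                      m * (norm (iota x))\<^sup>2 \<le> (norm (B1s t x))\<^sup>2 \<and>
                      (norm (B1s t x))\<^sup>2 \<le> M * (norm (iota x))\<^sup>2)"
    and Tbar_lt: "\<And>n. Tbar n < TT (2*n)"
    and obs: "\<And>n T w wt. T \<in> {Tbar n<..TT (2*n)} \<Longrightarrow>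
                 0 < d n T \<and>
                 (weak_sol {tt (2*n)..tt (2*n+1)} DS S f (\<lambda>t x. B1 t (B1s t x)) w wt \<longrightarrow>
                  energy S F w wt (tt (2*n) + T)
                    \<le> d n T * integral {tt (2*n)..tt (2*n) + T} (\<lambda>t. (norm (B1s t (wt t)))\<^sup>2))"
    and u_sol: "weak_sol {0..} DS S f (\<lambda>t x. B1 t (B1s t x) - B3 t (B3s t x)) u ut"
  shows "\<forall>n. energy S F u ut (tt (2*n+1))
              \<le> d n (TT (2*n)) / (d n (TT (2*n)) + 1) * energy S F u ut (tt (2*n))"
proof
  fix n
  define a b where "a = tt (2*n)" and "b = tt (2*n+1)"
  have ab: "a < b" unfolding a_def b_def using tt_mono by (simp add: strict_mono_less)
  have "0 \<le> a" unfolding a_def using tt0 tt_mono by (metis le0 strict_mono_less_eq)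
  hence sub: "{a..b} \<subseteq> {0..}" by auto
  have B3: "\<And>t. t \<in> {a..<b} \<Longrightarrow> B3 t = 0" using B3_zero unfolding a_def b_def by blast
  have lin: "linear_on_dom DS S"
    using S_sqrt unfolding is_op_sqrt_def self_adjoint_op_def by blast
  obtain g g' where g: "\<And>t. t \<in> {a..<b} \<Longrightarrow> B1 t = g t"
      and "\<And>t. t \<in> {a..b} \<Longrightarrow> (g has_vector_derivative g' t) (at t within {a..b})"
    using B1_C1[of n] unfolding a_def b_def by blast
  hence "continuous_on {a..b} g"
    unfolding continuous_on_eq_continuous_within using has_vector_derivative_continuous by blast
  from energy_dissipation_B1[OF lin f_lip F_deriv u_sol sub ab B1_adj B3 g this]
  have dissip: "integral {a..b} (\<lambda>t. (norm (B1s t (ut t)))\<^sup>2) = energy S F u ut a - energy S F u ut b"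
    by (rule integral_unique)
  have "TT (2*n) \<in> {Tbar n<..TT (2*n)}" using Tbar_lt[of n] by simp
  moreover have "a + TT (2*n) = b" unfolding TT_def a_def b_def by simp
  ultimately have obs_n: "0 < d n (TT (2*n)) \<and>
      (weak_sol {a..b} DS S f (\<lambda>t x. B1 t (B1s t x)) u ut \<longrightarrow>
       energy S F u ut b \<le> d n (TT (2*n)) * integral {a..b} (\<lambda>t. (norm (B1s t (ut t)))\<^sup>2))"
    using obs[of "TT (2*n)" n u ut, folded a_def b_def] by simp
  have "weak_sol {a..b} DS S f (\<lambda>t x. B1 t (B1s t x)) u ut"
    by (rule weak_sol_restrict[OF u_sol sub]) (simp add: B3)
  with obs_n have "0 < d n (TT (2*n))"
    and "energy S F u ut b \<le> d n (TT (2*n)) * (energy S F u ut a - energy S F u ut b)"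
    unfolding dissip by blast+
  from decay_of_dissipation_bound[OF this]
  show "energy S F u ut (tt (2*n+1)) \<le> d n (TT (2*n)) / (d n (TT (2*n)) + 1) * energy S F u ut (tt (2*n))"
    unfolding a_def b_def .
qed

end
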